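(* Let $\omega\in S_n$. The poset $M_\omega$ contains a $B_2$-pattern (i.e., four distinct elements whose induced subposet is isomorphic to $B_2$) if and only if $M_\omega$ contains a parallelogram-pattern poset.
   Context: Permutations $\omega\in S_n$ are written in one-line notation. Let ${\rm Inv}(\omega)=\{(i,j): 1\le i<j\le n,\ \omega(i)>\omega(j)\}$, $c_i(\omega)=\#\{j: i<j\le n,\ \omega(i)>\omega(j)\}$, and for $i<j$, $c_{i,j}(\omega)=\#\{k: i<k<j,\ \omega(i)>\omega(k)\}$; $[m]=\{1,\dots,m\}$. For $i$ with $c_i(\omega)>0$ and $x\in[c_i(\omega)]$, $m_{i,x}(\omega)\in\mathbb{N}^n$ has $j$-th coordinate $0$ if $j<i$; $x$ if $j=i$; $0$ if $j>i$ and $(i,j)\in{\rm Inv}(\omega)$; $\max\{0,x-c_{i,j}(\omega)\}$ if $j>i$ and $(i,j)\notin{\rm Inv}(\omega)$. $M_\omega$ is the set of all such $m_{i,x}(\omega)$, ordered by the product order on $\mathbb{N}^n$. $B_2$ is the Boolean lattice of rank 2 (a minimum, a maximum, and two incomparable elements between them). For $1\le i<j\le n$, $b<a$ in $[c_i(\omega)]$ and $c<d$ in $[c_j(\omega)]$ with $a+c=b+d$, the set $\{m_{i,a}(\omega),m_{i,b}(\omega),m_{j,c}(\omega),m_{j,d}(\omega)\}$ is a parallelogram-pattern poset if $m_{i,a}(\omega)>m_{j,d}(\omega)$, $m_{i,b}(\omega)>m_{j,c}(\omega)$, and $m_{i,b}(\omega)$, $m_{j,d}(\omega)$ are incomparable.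 *)

theory Defs
  imports "HOL-Combinatorics.Permutations"
begin

text \<open>A permutation of S_n is a function w :: nat => nat with w permutes {1..n}
  (one-line notation w(1) ... w(n)). Vectors in N^n are functions nat => nat whose
  coordinates are indexed by {1..n} and are 0 outside; the product order on N^n is
  then the pointwise order on functions.\<close>

definition Inv :: "nat \<Rightarrow> (nat \<Rightarrow> nat) \<Rightarrow> (nat \<times> nat) set" where
  "Inv n w = {(i, j). 1 \<le> i \<and> i < j \<and> j \<le> n \<and> w i > w j}"

definition cc :: "nat \<Rightarrow> (nat \<Rightarrow> nat) \<Rightarrow> nat \<Rightarrow> nat" where
  "cc n w i = card {j. i < j \<and> j \<le> n \<and> w i > w j}"

definition cij :: "(nat \<Rightarrow> nat) \<Rightarrow> nat \<Rightarrow> nat \<Rightarrow> nat" where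
  "cij w i j = card {k. i < k \<and> k < j \<and> w i > w k}"

definition mvec :: "nat \<Rightarrow> (nat \<Rightarrow> nat) \<Rightarrow> nat \<Rightarrow> nat \<Rightarrow> (nat \<Rightarrow> nat)" where
  "mvec n w i x = (\<lambda>j. if j < 1 \<or> j > n then 0
      else if j < i then 0
      else if j = i then x
      else if (i, j) \<in> Inv n w then 0
      else max 0 (x - cij w i j))"

definition Mset :: "nat \<Rightarrow> (nat \<Rightarrow> nat) \<Rightarrow> (nat \<Rightarrow> nat) set" where
  "Mset n w = {mvec n w i x | i x. 1 \<le> i \<and> i \<le> n \<and> cc n w i > 0 \<and> x \<in> {1..cc n w i}}"

definition b2_le :: "bool \<times> bool \<Rightarrow> bool \<times> bool \<Rightarrow> bool" where
  "b2_le p q = ((fst p \<longrightarrow> fst q) \<and> (snd p \<longrightarrow> snd q))"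

definition has_B2_pattern :: "(nat \<Rightarrow> nat) set \<Rightarrow> bool" where
  "has_B2_pattern P = (\<exists>f :: bool \<times> bool \<Rightarrow> (nat \<Rightarrow> nat).
      inj f \<and> range f \<subseteq> P \<and> (\<forall>p q. f p \<le> f q \<longleftrightarrow> b2_le p q))"

definition has_parallelogram_pattern :: "nat \<Rightarrow> (nat \<Rightarrow> nat) \<Rightarrow> bool" where
  "has_parallelogram_pattern n w = (\<exists>i j a b c d.
      1 \<le> i \<and> i < j \<and> j \<le> n \<and>
      b \<in> {1..cc n w i} \<and> a \<in> {1..cc n w i} \<and> b < a \<and>
      c \<in> {1..cc n w j} \<and> d \<in> {1..cc n w j} \<and> c < d \<and>
      a + c = b + d \<and>
      mvec n w i a > mvec n w j d \<and> mvec n w i b > mvec n w j c \<and>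
      \<not> mvec n w i b \<le> mvec n w j d \<and> \<not> mvec n w j d \<le> mvec n w i b)"

end

theory Submission
  imports Defs
begin

(*
  The vectors m_{i,x} of M_w have coordinate x at position i and 0 before i, so a
  comparison m_{j,y} <= m_{i,x} forces i <= j, and lowering x by one lowers every
  coordinate by one.

  * A parallelogram pattern is already a copy of B_2 (lemma parallelogram_gives_B2).
  * Conversely, whenever m_{j,d} <= m_{i,a} with i < j and d >= 2, shrinking a to the
    least admissible value a' yields the parallelogram m_{i,a'}, m_{i,a'-1}, m_{j,d},
    m_{j,d-1} (lemma parallelogram_from_comparison).  So without parallelograms every
    vector lying below a vector of an earlier row has value 1.
  * With all these values equal to 1, the coordinates of m_{i,1} can be described
    explicitly (it is the indicator of a run starting at i), and one shows that two
    middle elements of a B_2-copy would have to be comparable (lemma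
    unit_vector_below), a contradiction (lemma no_B2_without_parallelogram).
*)

lemma mvec_diag: "1 \<le> i \<Longrightarrow> i \<le> n \<Longrightarrow> mvec n w i x i = x"
  by (simp add: mvec_def)

lemma mvec_before: "k < i \<Longrightarrow> mvec n w i x k = 0"
  by (simp add: mvec_def)

lemma mvec_after:
  "1 \<le> i \<Longrightarrow> i < l \<Longrightarrow> l \<le> n \<Longrightarrow>
   mvec n w i x l = (if w i > w l then 0 else x - cij w i l)"
  by (simp add: mvec_def Inv_def)

lemma mvec_le_value: "mvec n w i x k \<le> x"
  by (simp add: mvec_def)

lemma mvec_pred: "mvec n w i (x - 1) k = mvec n w i x k - 1"
  by (simp add: mvec_def)

lemma mvec_mono: "x \<le> y \<Longrightarrow> mvec n w i x \<le> mvec n w i y"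
  by (auto simp add: mvec_def le_fun_def)

lemma mvec_same_row_le_iff:
  "1 \<le> i \<Longrightarrow> i \<le> n \<Longrightarrow> mvec n w i x \<le> mvec n w i y \<longleftrightarrow> x \<le> y"
  by (metis le_fun_def mvec_diag mvec_mono)

lemma mvec_not_le_later_row:
  assumes "1 \<le> i" "i < j" "j \<le> n" "1 \<le> x"
  shows "\<not> mvec n w i x \<le> mvec n w j y"
proof
  assume "mvec n w i x \<le> mvec n w j y"
  then have "mvec n w i x i \<le> mvec n w j y i" by (simp add: le_fun_def)
  with assms show False by (simp add: mvec_diag mvec_before)
qed

lemma mvec_le_row_order:
  "mvec n w j y \<le> mvec n w i x \<Longrightarrow> 1 \<le> j \<Longrightarrow> i \<le> n \<Longrightarrow> 1 \<le> y \<Longrightarrow> i \<le> j"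
  using mvec_not_le_later_row[of j i n y w x] by force

lemma cij_eq_0_iff: "cij w i l = 0 \<longleftrightarrow> (\<forall>k. i < k \<and> k < l \<longrightarrow> w i \<le> w k)"
proof -
  have "finite {k. i < k \<and> k < l \<and> w i > w k}" by (rule finite_subset[of _ "{..<l}"]) auto
  then have "cij w i l = 0 \<longleftrightarrow> {k. i < k \<and> k < l \<and> w i > w k} = {}" by (simp add: cij_def)
  also have "\<dots> \<longleftrightarrow> (\<forall>k. i < k \<and> k < l \<longrightarrow> w i \<le> w k)"
    by (metis (mono_tags, lifting) empty_Collect_eq not_le)
  finally show ?thesis .
qed

lemma cij_skip_large:
  assumes "t < i" "i \<le> l" "\<forall>k. i \<le> k \<and> k < l \<longrightarrow> w t < w k"
  shows "cij w t l = cij w t i"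
  unfolding cij_def using assms
  by (intro arg_cong[where f=card]) (auto, metis less_asym not_le)

definition run_from :: "nat \<Rightarrow> (nat \<Rightarrow> nat) \<Rightarrow> nat \<Rightarrow> nat \<Rightarrow> bool" where
  "run_from n w i l \<longleftrightarrow> i \<le> l \<and> l \<le> n \<and> (\<forall>k. i < k \<and> k \<le> l \<longrightarrow> w i \<le> w k)"

lemma mvec_unit_coord:
  assumes "1 \<le> i" "i \<le> n"
  shows "mvec n w i 1 l = (if run_from n w i l then 1 else 0)"
proof (cases "i < l \<and> l \<le> n")
  case True
  have "(\<forall>k. i < k \<and> k \<le> l \<longrightarrow> w i \<le> w k) \<longleftrightarrow> w i \<le> w l \<and> cij w i l = 0"
    using True by (auto simp: cij_eq_0_iff) (metis le_eq_less_or_eq)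
  then show ?thesis
    using True assms mvec_after[of i l n w 1] by (auto simp: run_from_def not_less)
next
  case False
  then show ?thesis
    using assms by (auto simp: run_from_def mvec_def)
qed

lemma mvec_constant_on_run:
  assumes "1 \<le> t" "t < i" "i \<le> l" "l \<le> n" "\<forall>k. i \<le> k \<and> k \<le> l \<longrightarrow> w t < w k"
  shows "mvec n w t x l = x - cij w t i"
proof -
  have "cij w t l = cij w t i" using assms by (intro cij_skip_large) auto
  moreover have "\<not> w t > w l" using assms by auto
  ultimately show ?thesis using assms mvec_after[of t l n w x] by simp
qed

lemma unit_vector_below:
  assumes "1 \<le> t" "t < i" "i < s" "s \<le> n" "w t < w i"
    and below_i: "mvec n w s 1 \<le> mvec n w i 1" and below_t: "mvec n w s 1 \<le> mvec n w t x"
  shows "mvec n w i 1 \<le> mvec n w t x"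
proof -
  have run_value: "mvec n w t x l = x - cij w t i" if "run_from n w i l" for l
    using that assms by (intro mvec_constant_on_run) (auto simp: run_from_def le_less)
  have "mvec n w s 1 s \<le> mvec n w i 1 s" using below_i by (simp add: le_fun_def)
  then have run_s: "run_from n w i s"
    using assms mvec_diag[of s n w 1] mvec_unit_coord[of i n w s] by (auto split: if_splits)
  have "mvec n w s 1 s \<le> mvec n w t x s" using below_t by (simp add: le_fun_def)
  then have positive: "1 \<le> x - cij w t i"
    using assms run_value[OF run_s] mvec_diag[of s n w 1] by simp
  show ?thesis
  proof (rule le_funI)
    fix l
    show "mvec n w i 1 l \<le> mvec n w t x l"
      using assms positive run_value[of l] mvec_unit_coord[of i n w l] by auto
  qed
qed

text \<open>A comparison m_{j,d} <= m_{i,a} between rows i < j with d >= 2 produces a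
  parallelogram: with a' least such that m_{j,d} <= m_{i,a'}, the four vectors
  m_{i,a'}, m_{i,a'-1}, m_{j,d}, m_{j,d-1} form one.\<close>

lemma parallelogram_from_comparison:
  assumes rows: "1 \<le> i" "i < j" "j \<le> n" and d: "2 \<le> d" "d \<le> cc n w j" "a \<le> cc n w i"
    and le: "mvec n w j d \<le> mvec n w i a"
  shows "has_parallelogram_pattern n w"
proof -
  define a' where "a' = (LEAST x. mvec n w j d \<le> mvec n w i x)"
  have le_a': "mvec n w j d \<le> mvec n w i a'" unfolding a'_def by (rule LeastI[of _ a]) (rule le)
  have "a' \<le> a" unfolding a'_def by (rule Least_le) (rule le)
  have "d \<le> a'"
  proof -
    have "mvec n w j d j \<le> mvec n w i a' j" using le_a' by (simp add: le_fun_def)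
    also have "\<dots> \<le> a'" by (rule mvec_le_value)
    finally show ?thesis using rows by (simp add: mvec_diag)
  qed
  have not_le_pred: "\<not> mvec n w j d \<le> mvec n w i (a' - 1)"
  proof
    assume "mvec n w j d \<le> mvec n w i (a' - 1)"
    then have "a' \<le> a' - 1" unfolding a'_def by (rule Least_le)
    with \<open>d \<le> a'\<close> d show False by simp
  qed
  have le_pred: "mvec n w j (d - 1) \<le> mvec n w i (a' - 1)"
  proof (rule le_funI)
    fix k
    have "mvec n w j d k \<le> mvec n w i a' k" using le_a' by (simp add: le_fun_def)
    then show "mvec n w j (d - 1) k \<le> mvec n w i (a' - 1) k"
      unfolding mvec_pred by (rule diff_le_mono)
  qed
  have "1 \<le> i \<and> i < j \<and> j \<le> n \<and>
      a' - 1 \<in> {1..cc n w i} \<and> a' \<in> {1..cc n w i} \<and> a' - 1 < a' \<and>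
      d - 1 \<in> {1..cc n w j} \<and> d \<in> {1..cc n w j} \<and> d - 1 < d \<and>
      a' + (d - 1) = (a' - 1) + d \<and>
      mvec n w i a' > mvec n w j d \<and> mvec n w i (a' - 1) > mvec n w j (d - 1) \<and>
      \<not> mvec n w i (a' - 1) \<le> mvec n w j d \<and> \<not> mvec n w j d \<le> mvec n w i (a' - 1)"
    using rows d \<open>a' \<le> a\<close> \<open>d \<le> a'\<close> le_a' le_pred not_le_pred
      mvec_not_le_later_row[of i j n a' w d] mvec_not_le_later_row[of i j n "a' - 1" w "d - 1"]
      mvec_not_le_later_row[of i j n "a' - 1" w d]
    by (auto simp add: less_fun_def)
  then show ?thesis unfolding has_parallelogram_pattern_def by blast
qed

lemma value_one_below_earlier_row:
  assumes "\<not> has_parallelogram_pattern n w"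
    and "1 \<le> i" "i < j" "j \<le> n" "1 \<le> d" "d \<le> cc n w j" "a \<le> cc n w i"
    and "mvec n w j d \<le> mvec n w i a"
  shows "d = 1"
  using assms parallelogram_from_comparison[of i j n d w a] by force

lemma Mset_elem:
  "m \<in> Mset n w \<Longrightarrow> \<exists>i x. m = mvec n w i x \<and> 1 \<le> i \<and> i \<le> n \<and> 1 \<le> x \<and> x \<le> cc n w i"
  by (auto simp add: Mset_def)

lemma mvec_in_Mset: "1 \<le> i \<Longrightarrow> i \<le> n \<Longrightarrow> 1 \<le> x \<Longrightarrow> x \<le> cc n w i \<Longrightarrow> mvec n w i x \<in> Mset n w"
  unfolding Mset_def by force

text \<open>All vectors
  in later rows than the top are then unit vectors m_{.,1}, and the middle element of
  row i2 is forced below that of row i1 by unit_vector_below.\<close>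

lemma no_B2_without_parallelogram:
  assumes injw: "inj w" and no_par: "\<not> has_parallelogram_pattern n w"
    and top: "1 \<le> t" "t \<le> n" "1 \<le> a" "a \<le> cc n w t"
    and mid1: "1 \<le> i1" "i1 \<le> n" "1 \<le> x" "x \<le> cc n w i1"
    and mid2: "1 \<le> i2" "i2 \<le> n" "1 \<le> y" "y \<le> cc n w i2"
    and bot: "1 \<le> s" "s \<le> n" "1 \<le> c" "c \<le> cc n w s"
    and le1: "mvec n w i1 x \<le> mvec n w t a" and le2: "mvec n w i2 y \<le> mvec n w t a"
    and le3: "mvec n w s c \<le> mvec n w i1 x" and le4: "mvec n w s c \<le> mvec n w i2 y"
    and incomparable: "\<not> mvec n w i2 y \<le> mvec n w i1 x"
    and distinct: "mvec n w s c \<noteq> mvec n w i2 y"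
    and i12: "i1 < i2"
  shows False
proof -
  have "t \<le> i1" using mvec_le_row_order[OF le1] top mid1 by simp
  have "i2 \<le> s" using mvec_le_row_order[OF le4] mid2 bot by simp
  have y: "y = 1"
    using value_one_below_earlier_row[OF no_par, of t i2 y a] top mid2 \<open>t \<le> i1\<close> i12 le2
    by simp
  have c: "c = 1"
    using value_one_below_earlier_row[OF no_par, of t s c a] top bot \<open>t \<le> i1\<close> i12
      \<open>i2 \<le> s\<close> order.trans[OF le3 le1] by simp
  have "i2 < s" using \<open>i2 \<le> s\<close> distinct y c by (cases "s = i2") auto
  have "w i1 \<noteq> w i2" using injw i12 by (metis inj_eq less_irrefl)
  show False
  proof (cases "t < i1")
    case True
    have x: "x = 1"
      using value_one_below_earlier_row[OF no_par, of t i1 x a] True top mid1 le1 by simp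
    have "mvec n w s 1 s \<le> mvec n w i1 1 s" using le3 c x by (simp add: le_fun_def)
    then have "run_from n w i1 s"
      using mid1 bot mvec_diag[of s n w 1] mvec_unit_coord[of i1 n w s] by (auto split: if_splits)
    then have "w i1 < w i2"
      using \<open>w i1 \<noteq> w i2\<close> i12 \<open>i2 < s\<close> by (auto simp: run_from_def)
    then have "mvec n w i2 1 \<le> mvec n w i1 1"
      using unit_vector_below[of i1 i2 s n w 1] mid1 i12 \<open>i2 < s\<close> bot le3 le4 c y x by simp
    then show False using incomparable x y by simp
  next
    case False
    then have t: "t = i1" using \<open>t \<le> i1\<close> by simp
    have "mvec n w i2 1 i2 \<le> mvec n w t a i2" using le2 y by (simp add: le_fun_def)
    then have "\<not> w t > w i2"
      using mid2 i12 t mid1 mvec_diag[of i2 n w 1] mvec_after[of t i2 n w a] by auto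
    then have "w t < w i2" using \<open>w i1 \<noteq> w i2\<close> t by simp
    then have "mvec n w i2 1 \<le> mvec n w t x"
      using unit_vector_below[of t i2 s n w x] mid1 i12 t \<open>i2 < s\<close> bot le3 le4 c y by simp
    then show False using incomparable t y by simp
  qed
qed

text \<open>Reading off the four elements of a B_2-copy, the two middle elements lie in
  different rows (vectors of one row form a chain), so the previous lemma applies.\<close>

lemma B2_gives_parallelogram:
  assumes injw: "inj w" and B2: "has_B2_pattern (Mset n w)"
  shows "has_parallelogram_pattern n w"
proof (rule ccontr)
  assume no_par: "\<not> has_parallelogram_pattern n w"
  from B2 obtain f :: "bool \<times> bool \<Rightarrow> (nat \<Rightarrow> nat)" where
    inj: "inj f" and rg: "range f \<subseteq> Mset n w" and ord: "\<forall>p q. f p \<le> f q \<longleftrightarrow> b2_le p q"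
    unfolding has_B2_pattern_def by blast
  obtain t a where T: "f (True, True) = mvec n w t a" "1 \<le> t" "t \<le> n" "1 \<le> a" "a \<le> cc n w t"
    using Mset_elem[of "f (True, True)" n w] rg by blast
  obtain i1 x where P: "f (True, False) = mvec n w i1 x" "1 \<le> i1" "i1 \<le> n" "1 \<le> x" "x \<le> cc n w i1"
    using Mset_elem[of "f (True, False)" n w] rg by blast
  obtain i2 y where Q: "f (False, True) = mvec n w i2 y" "1 \<le> i2" "i2 \<le> n" "1 \<le> y" "y \<le> cc n w i2"
    using Mset_elem[of "f (False, True)" n w] rg by blast
  obtain s c where S: "f (False, False) = mvec n w s c" "1 \<le> s" "s \<le> n" "1 \<le> c" "c \<le> cc n w s"
    using Mset_elem[of "f (False, False)" n w] rg by blast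
  have o1: "mvec n w i1 x \<le> mvec n w t a" using ord T P by (metis b2_le_def fst_conv snd_conv)
  have o2: "mvec n w i2 y \<le> mvec n w t a" using ord T Q by (metis b2_le_def fst_conv snd_conv)
  have o3: "mvec n w s c \<le> mvec n w i1 x" using ord S P by (metis b2_le_def fst_conv snd_conv)
  have o4: "mvec n w s c \<le> mvec n w i2 y" using ord S Q by (metis b2_le_def fst_conv snd_conv)
  have o5: "\<not> mvec n w i2 y \<le> mvec n w i1 x" using ord P Q by (metis b2_le_def fst_conv snd_conv)
  have o6: "\<not> mvec n w i1 x \<le> mvec n w i2 y" using ord P Q by (metis b2_le_def fst_conv snd_conv)
  have n1: "mvec n w s c \<noteq> mvec n w i2 y" using inj S Q by (metis inj_eq prod.inject)
  have n2: "mvec n w s c \<noteq> mvec n w i1 x" using inj S P by (metis inj_eq prod.inject)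
  have "i1 \<noteq> i2"
    using o5 o6 mvec_mono[of x y n w i1] mvec_mono[of y x n w i1] by (cases "x \<le> y") auto
  then consider "i1 < i2" | "i2 < i1" by linarith
  then show False
  proof cases
    case 1
    show False by (rule no_B2_without_parallelogram
        [OF injw no_par T(2-5) P(2-5) Q(2-5) S(2-5) o1 o2 o3 o4 o5 n1 1])
  next
    case 2
    show False by (rule no_B2_without_parallelogram
        [OF injw no_par T(2-5) Q(2-5) P(2-5) S(2-5) o2 o1 o4 o3 o6 n2 2])
  qed
qed

lemma parallelogram_gives_B2:
  assumes "has_parallelogram_pattern n w"
  shows "has_B2_pattern (Mset n w)"
proof -
  from assms obtain i j a b c d where h: "1 \<le> i" "i < j" "j \<le> n"
      "b \<in> {1..cc n w i}" "a \<in> {1..cc n w i}" "b < a"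
      "c \<in> {1..cc n w j}" "d \<in> {1..cc n w j}" "c < d"
      "mvec n w i a > mvec n w j d" "mvec n w i b > mvec n w j c"
      "\<not> mvec n w j d \<le> mvec n w i b"
    unfolding has_parallelogram_pattern_def by blast
  define f where "f = (\<lambda>(u::bool, v::bool). if u then (if v then mvec n w i a else mvec n w i b)
      else (if v then mvec n w j d else mvec n w j c))"
  have row_i: "mvec n w i b \<le> mvec n w i a" "\<not> mvec n w i a \<le> mvec n w i b"
    using h mvec_same_row_le_iff[of i n w] by auto
  have row_j: "mvec n w j c \<le> mvec n w j d" "\<not> mvec n w j d \<le> mvec n w j c"
    using h mvec_same_row_le_iff[of j n w] by auto
  have across: "mvec n w j c \<le> mvec n w i b" "mvec n w j d \<le> mvec n w i a"
    using h by (auto simp: less_fun_def)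
  have upward: "\<And>e z. 1 \<le> e \<Longrightarrow> \<not> mvec n w i e \<le> mvec n w j z"
    using h mvec_not_le_later_row by blast
  have ord: "\<forall>p q. f p \<le> f q \<longleftrightarrow> b2_le p q"
  proof (intro allI)
    fix p q :: "bool \<times> bool"
    obtain u1 v1 u2 v2 where pq: "p = (u1, v1)" "q = (u2, v2)" by fastforce
    have "1 \<le> a" "1 \<le> b" using h by auto
    then show "f p \<le> f q \<longleftrightarrow> b2_le p q"
      unfolding pq f_def b2_le_def
      using row_i row_j across order.trans[OF across(1) row_i(1)] upward h(12)
      by (cases u1; cases v1; cases u2; cases v2) auto
  qed
  have "inj f"
  proof (rule injI)
    fix p q assume "f p = f q"
    then have "b2_le p q" "b2_le q p" using ord by (metis order_refl)+
    then show "p = q" by (cases p; cases q) (auto simp: b2_le_def)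
  qed
  moreover have "range f \<subseteq> Mset n w"
    using h by (auto simp: f_def intro!: mvec_in_Mset split: prod.splits)
  ultimately show ?thesis unfolding has_B2_pattern_def using ord by blast
qed

theorem mainTheorem7:
  fixes n :: nat and w :: "nat \<Rightarrow> nat"
  assumes "w permutes {1..n}"
  shows "has_B2_pattern (Mset n w) \<longleftrightarrow> has_parallelogram_pattern n w"
proof
  show "has_B2_pattern (Mset n w) \<Longrightarrow> has_parallelogram_pattern n w"
    using B2_gives_parallelogram permutes_inj[OF assms] by blast
  show "has_parallelogram_pattern n w \<Longrightarrow> has_B2_pattern (Mset n w)"
    by (rule parallelogram_gives_B2)
qed

end
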